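(* Let $\mathcal G$ be an undirected graph on nodes $\{1,\dots,n\}$ with adjacency matrix $A=(a_{ij})$, and consider the networked SIR process on $\mathcal G$ with a given set of initially infected nodes. Let a budget $\bar C>0$, a level $\bar\lambda>0$, intervals $[\underline\beta_i,\bar\beta_i]\subset(0,\infty)$, $[\underline\delta_i,\bar\delta_i]\subset(0,\infty)$, and cost functions $f_i,g_i$ ($i=1,\dots,n$) be given, where each $f_i$ and each $g_i$ is a posynomial. Let $J,B,D$ be the $n\times n$ diagonal matrices with $J_{ii}=S_i(0)$, $B_{ii}=\beta_i$, $D_{ii}=\delta_i$. Suppose $\beta_1,\dots,\beta_n,\delta_1,\dots,\delta_n$ and an entrywise positive $v\in\mathbb R^n$ satisfy the (posynomial) constraints $$\sum_{i=1}^n\big(f_i(\delta_i)+g_i(\beta_i)\big)\le\bar C,\quad v^\top JBA+\mathbf 1_n^\top D<v^\top D,\quad v^\top I(0)<\bar\lambda+\sigma_I(0),$$ $$\underline\beta_i\le\beta_i\le\bar\beta_i,\quad \underline\delta_i\le\delta_i\le\bar\delta_i\quad(i=1,\dots,n).$$ Then these $\beta_i,\delta_i$ solve the resource allocation problem, i.e., $\beta_i\in[\underline\beta_i,\bar\beta_i]$, $\delta_i\in[\underline\delta_i,\bar\delta_i]$ for all $i$, $\sum_{i=1}^n(f_i(\delta_i)+g_i(\beta_i))\le\bar C$, and the SIR process with infection rates $\beta_i$ and recovery rates $\delta_i$ satisfies $\lambda\le\bar\lambda$.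
   Context: Networked SIR process with infection rates $\beta_i>0$ and recovery rates $\delta_i>0$: each node $i$ is at each time $t\ge0$ in exactly one of the states susceptible, infected, removed, encoded by $\{0,1\}$-valued $S_i(t),I_i(t),R_i(t)$. It is a continuous-time Markov process with $\Pr(I_i(t+h)=1\mid S_i(t)=1)=\beta_i\sum_{j}a_{ij}I_j(t)h+o(h)$ and $\Pr(R_i(t+h)=1\mid I_i(t)=1)=\delta_i h+o(h)$; removed nodes stay removed. At time $0$ each node is either susceptible or infected (known). $I(t)=[I_1(t),\dots,I_n(t)]^\top$; $\sigma_I(t),\sigma_R(t)$ are the numbers of infected and removed nodes at time $t$; $\lambda=\lim_{t\to\infty}E[\sigma_R(t)]-\sigma_I(0)$. A monomial in positive variables $x_1,\dots,x_m$ is $c x_1^{a_1}\cdots x_m^{a_m}$ with $c>0$, $a_k\in\mathbb R$; a posynomial is a finite sum of monomials. $\mathbf 1_n$ is the all-ones vector; vector inequalities are entrywise. *)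

theory Defs
  imports "HOL-Analysis.Analysis"
begin

datatype st = Sus | Inf | Rem

lemma UNIV_st: "(UNIV :: st set) = {Sus, Inf, Rem}"
  by (auto intro: st.exhaust)

instance st :: finite
  by standard (simp add: UNIV_st)

definition sir_rate ::
  "('n::finite \<Rightarrow> 'n \<Rightarrow> real) \<Rightarrow> ('n \<Rightarrow> real) \<Rightarrow> ('n \<Rightarrow> real) \<Rightarrow> ('n \<Rightarrow> st) \<Rightarrow> ('n \<Rightarrow> st) \<Rightarrow> real"
  where "sir_rate a \<beta> \<delta> x y =
    (\<Sum>i\<in>UNIV.
       (if x i = Sus \<and> y = x(i := Inf)
        then \<beta> i * (\<Sum>j\<in>UNIV. a i j * (if x j = Inf then 1 else 0)) else 0)
     + (if x i = Inf \<and> y = x(i := Rem) then \<delta> i else 0))"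

text \<open>p t y = probability that the process is in configuration y at time t, started
  deterministically in x0: the (unique) solution of the Kolmogorov forward equation.\<close>
definition sir_dist ::
  "('n::finite \<Rightarrow> 'n \<Rightarrow> real) \<Rightarrow> ('n \<Rightarrow> real) \<Rightarrow> ('n \<Rightarrow> real) \<Rightarrow> ('n \<Rightarrow> st)
    \<Rightarrow> (real \<Rightarrow> ('n \<Rightarrow> st) \<Rightarrow> real) \<Rightarrow> bool"
  where "sir_dist a \<beta> \<delta> x0 p \<longleftrightarrow>
    (\<forall>y. p 0 y = (if y = x0 then 1 else 0)) \<and>
    (\<forall>t\<ge>0. \<forall>y. ((\<lambda>s. p s y) has_real_derivative
        ((\<Sum>x\<in>UNIV. p t x * sir_rate a \<beta> \<delta> x y)
         - p t y * (\<Sum>z\<in>UNIV. sir_rate a \<beta> \<delta> y z))) (at t within {0..}))"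

definition count_st :: "st \<Rightarrow> ('n::finite \<Rightarrow> st) \<Rightarrow> real"
  where "count_st s x = real (card {i. x i = s})"

definition posynomial :: "(real \<Rightarrow> real) \<Rightarrow> bool"
  where "posynomial f \<longleftrightarrow>
    (\<exists>cs :: (real \<times> real) list. (\<forall>(c, e)\<in>set cs. c > 0) \<and>
       (\<forall>x>0. f x = (\<Sum>(c, e)\<leftarrow>cs. c * x powr e)))"

end

theory Submission
  imports Defs
begin

text \<open>Let \<open>\<Phi>\<close> give weight \<open>v\<^sub>k\<close> to an infected node \<open>k\<close> and weight 1 to a removed one. An
  infection of node \<open>i\<close> raises \<open>\<Phi>\<close> by \<open>v\<^sub>i\<close> at rate \<open>\<beta>\<^sub>i \<Sum>\<^sub>j a\<^sub>i\<^sub>j I\<^sub>j\<close>, a recovery of node \<open>j\<close>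
  changes it by \<open>1 - v\<^sub>j\<close> at rate \<open>\<delta>\<^sub>j\<close>; collecting terms by \<open>j\<close>, the drift of \<open>\<Phi>\<close> is at most
  \<open>\<Sum>\<^sub>j I\<^sub>j ((v\<^sup>T J B A)\<^sub>j + \<delta>\<^sub>j - v\<^sub>j \<delta>\<^sub>j) \<le> 0\<close>. So \<open>E \<Phi>\<close> is non-increasing, while the
  number of removed nodes is non-decreasing and bounded by \<open>\<Phi>\<close>; its expectation therefore
  converges to a limit at most \<open>\<Phi>(x\<^sub>0) = v\<^sup>T I(0)\<close>. Both monotonicity statements follow from
  the Kolmogorov forward equation once the probabilities are known to be nonnegative, which
  holds by induction along the acyclic transition graph.\<close>

lemma DERIV_nonneg_imp_mono_on_atLeast:
  fixes F F' :: "real \<Rightarrow> real"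
  assumes deriv: "\<And>t. t \<ge> c \<Longrightarrow> (F has_real_derivative F' t) (at t within {c..})"
    and nonneg: "\<And>t. t \<ge> c \<Longrightarrow> F' t \<ge> 0" and "c \<le> s" "s \<le> t"
  shows "F s \<le> F t"
proof -
  have "continuous_on {c..} F"
    unfolding continuous_on_eq_continuous_within
    using deriv DERIV_continuous by (metis atLeast_iff)
  then have cont: "continuous_on {s..t} F"
    by (rule continuous_on_subset) (use \<open>c \<le> s\<close> in auto)
  show ?thesis
  proof (rule DERIV_nonneg_imp_increasing_open[OF \<open>s \<le> t\<close> _ cont])
    fix x assume x: "s < x" "x < t"
    then have "at x within {c..} = at x"
      using \<open>c \<le> s\<close> by (intro at_within_interior) simp
    then show "\<exists>y. DERIV F x :> y \<and> 0 \<le> y"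
      using deriv[of x] nonneg[of x] x \<open>c \<le> s\<close> by auto
  qed
qed

lemma mono_bounded_tendsto_at_top:
  fixes f :: "real \<Rightarrow> real"
  assumes mono: "\<And>s t. c \<le> s \<Longrightarrow> s \<le> t \<Longrightarrow> f s \<le> f t"
    and bound: "\<And>t. c \<le> t \<Longrightarrow> f t \<le> M"
  shows "\<exists>L. (f \<longlongrightarrow> L) at_top \<and> L \<le> M"
proof (intro exI conjI)
  let ?L = "Sup (f ` {c..})"
  have bdd: "bdd_above (f ` {c..})"
    using bound by (intro bdd_aboveI[of _ M]) auto
  show "?L \<le> M"
    by (rule cSup_least) (use bound in auto)
  show "(f \<longlongrightarrow> ?L) at_top"
  proof (rule order_tendstoI)
    fix y assume "y < ?L"
    then obtain t0 where t0: "c \<le> t0" "y < f t0"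
      using less_cSup_iff[OF _ bdd] by auto
    have "y < f t" if "t0 \<le> t" for t
      using mono[OF t0(1) that] t0(2) by linarith
    then show "\<forall>\<^sub>F t in at_top. y < f t"
      by (rule eventually_at_top_linorderI)
  next
    fix y assume "?L < y"
    have "f t < y" if "c \<le> t" for t
      using cSup_upper[OF _ bdd, of "f t"] that \<open>?L < y\<close> by auto
    then show "\<forall>\<^sub>F t in at_top. f t < y"
      by (rule eventually_at_top_linorderI)
  qed
qed

subsection \<open>The forward equation of a finite Markov chain\<close>

definition forward_equation ::
  "('m::finite \<Rightarrow> 'm \<Rightarrow> real) \<Rightarrow> 'm \<Rightarrow> (real \<Rightarrow> 'm \<Rightarrow> real) \<Rightarrow> bool"
  where "forward_equation r x0 p \<longleftrightarrow>
    (\<forall>y. p 0 y = (if y = x0 then 1 else 0)) \<and>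
    (\<forall>t\<ge>0. \<forall>y. ((\<lambda>s. p s y) has_real_derivative
        ((\<Sum>x\<in>UNIV. p t x * r x y) - p t y * (\<Sum>z\<in>UNIV. r y z))) (at t within {0..}))"

definition generator :: "('m::finite \<Rightarrow> 'm \<Rightarrow> real) \<Rightarrow> ('m \<Rightarrow> real) \<Rightarrow> 'm \<Rightarrow> real"
  where "generator r h x = (\<Sum>y\<in>UNIV. r x y * (h y - h x))"

lemma sir_dist_iff_forward_equation:
  "sir_dist a \<beta> \<delta> x0 p \<longleftrightarrow> forward_equation (sir_rate a \<beta> \<delta>) x0 p"
  unfolding sir_dist_def forward_equation_def ..

lemma sum_forward_rhs_eq_sum_generator:
  fixes p h :: "'m::finite \<Rightarrow> real" and r :: "'m \<Rightarrow> 'm \<Rightarrow> real"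
  shows "(\<Sum>y\<in>UNIV. ((\<Sum>x\<in>UNIV. p x * r x y) - p y * (\<Sum>z\<in>UNIV. r y z)) * h y)
       = (\<Sum>x\<in>UNIV. p x * generator r h x)"
proof -
  have "(\<Sum>y\<in>UNIV. ((\<Sum>x\<in>UNIV. p x * r x y) - p y * (\<Sum>z\<in>UNIV. r y z)) * h y)
      = (\<Sum>y\<in>UNIV. \<Sum>x\<in>UNIV. p x * r x y * h y) - (\<Sum>x\<in>UNIV. \<Sum>y\<in>UNIV. p x * r x y * h x)"
    by (simp add: left_diff_distrib sum_subtractf sum_distrib_right sum_distrib_left mult.assoc)
  also have "\<dots> = (\<Sum>x\<in>UNIV. \<Sum>y\<in>UNIV. p x * r x y * h y) - (\<Sum>x\<in>UNIV. \<Sum>y\<in>UNIV. p x * r x y * h x)"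
    by (subst sum.swap) (rule refl)
  also have "\<dots> = (\<Sum>x\<in>UNIV. p x * generator r h x)"
    by (simp add: generator_def right_diff_distrib sum_subtractf sum_distrib_left mult.assoc)
  finally show ?thesis .
qed

lemma forward_equation_expectation_deriv:
  assumes "forward_equation r x0 p" "t \<ge> 0"
  shows "((\<lambda>s. \<Sum>y\<in>UNIV. p s y * h y) has_real_derivative
           (\<Sum>x\<in>UNIV. p t x * generator r h x)) (at t within {0..})"
proof -
  have "((\<lambda>s. \<Sum>y\<in>UNIV. p s y * h y) has_real_derivative
     (\<Sum>y\<in>UNIV. ((\<Sum>x\<in>UNIV. p t x * r x y) - p t y * (\<Sum>z\<in>UNIV. r y z)) * h y))
     (at t within {0..})"
    using assms unfolding forward_equation_def by (intro DERIV_sum DERIV_cmult_right) auto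
  then show ?thesis
    by (simp only: sum_forward_rhs_eq_sum_generator)
qed

lemma forward_equation_expectation_0:
  assumes "forward_equation r x0 p"
  shows "(\<Sum>y\<in>UNIV. p 0 y * h y) = h x0"
proof -
  have "p 0 y * h y = (if y = x0 then h y else 0)" for y
    using assms by (simp add: forward_equation_def)
  then show ?thesis
    by simp
qed

text \<open>A rank that increases along every transition makes the chain acyclic; the
  probability of \<open>y\<close> is then fed only by states of smaller rank, whose probabilities are
  nonnegative by induction, and \<open>exp (c t) p t y\<close> with \<open>c\<close> the exit rate of \<open>y\<close> is
  non-decreasing.\<close>

lemma forward_equation_nonneg:
  fixes rank :: "'m::finite \<Rightarrow> nat"
  assumes fwd: "forward_equation r x0 p"
    and rate_nonneg: "\<And>x y. r x y \<ge> 0"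
    and rank_less: "\<And>x y. r x y \<noteq> 0 \<Longrightarrow> rank x < rank y"
    and "t \<ge> 0"
  shows "p t y \<ge> 0"
  using \<open>t \<ge> 0\<close>
proof (induction y arbitrary: t rule: measure_induct_rule[of rank])
  case (less y)
  define c where "c = (\<Sum>z\<in>UNIV. r y z)"
  define inflow where "inflow t = (\<Sum>x\<in>UNIV. p t x * r x y)" for t
  have inflow_nonneg: "inflow t \<ge> 0" if "t \<ge> 0" for t
    unfolding inflow_def
  proof (rule sum_nonneg)
    fix x
    show "0 \<le> p t x * r x y"
      using less.IH[OF rank_less that] rate_nonneg[of x y] by (cases "r x y = 0") auto
  qed
  have deriv: "((\<lambda>s. exp (c * s) * p s y) has_real_derivative exp (c * t) * inflow t)
      (at t within {0..})" if "t \<ge> 0" for t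
  proof -
    have "((\<lambda>s. exp (c * s)) has_real_derivative exp (c * t) * c) (at t within {0..})"
      by (auto intro!: derivative_eq_intros)
    moreover have "((\<lambda>s. p s y) has_real_derivative inflow t - p t y * c) (at t within {0..})"
      using fwd that unfolding forward_equation_def inflow_def c_def by blast
    ultimately show ?thesis
      by (rule DERIV_mult[THEN DERIV_cong]) (simp add: algebra_simps)
  qed
  have "exp (c * 0) * p 0 y \<le> exp (c * t) * p t y"
    by (rule DERIV_nonneg_imp_mono_on_atLeast[OF deriv _ order_refl less.prems])
       (use inflow_nonneg in auto)
  moreover have "p 0 y \<ge> 0"
    using fwd unfolding forward_equation_def by simp
  ultimately have "0 \<le> exp (c * t) * p t y"
    by simp
  then show ?case
    by (simp add: zero_le_mult_iff)
qed

lemma forward_equation_expectation_mono: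
  assumes fwd: "forward_equation r x0 p"
    and p_nonneg: "\<And>t y. t \<ge> 0 \<Longrightarrow> p t y \<ge> 0"
    and drift_nonneg: "\<And>x. generator r h x \<ge> 0"
    and "0 \<le> s" "s \<le> t"
  shows "(\<Sum>y\<in>UNIV. p s y * h y) \<le> (\<Sum>y\<in>UNIV. p t y * h y)"
proof (rule DERIV_nonneg_imp_mono_on_atLeast[OF forward_equation_expectation_deriv[OF fwd]])
  show "0 \<le> (\<Sum>x\<in>UNIV. p u x * generator r h x)" if "0 \<le> u" for u
    using p_nonneg[OF that] drift_nonneg by (simp add: sum_nonneg)
qed (use assms in simp_all)

lemma generator_uminus: "generator r (\<lambda>x. - h x) x = - generator r h x"
  unfolding generator_def by (simp only: sum_negf[symmetric]) (simp add: algebra_simps)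

lemma forward_equation_expectation_antimono:
  assumes fwd: "forward_equation r x0 p"
    and p_nonneg: "\<And>t y. t \<ge> 0 \<Longrightarrow> p t y \<ge> 0"
    and drift_nonpos: "\<And>x. generator r h x \<le> 0"
    and "0 \<le> s" "s \<le> t"
  shows "(\<Sum>y\<in>UNIV. p t y * h y) \<le> (\<Sum>y\<in>UNIV. p s y * h y)"
  using forward_equation_expectation_mono[OF fwd p_nonneg, of "\<lambda>x. - h x"] assms
  by (simp add: generator_uminus sum_negf)

lemma forward_equation_expectation_limit_le:
  assumes fwd: "forward_equation r x0 p"
    and p_nonneg: "\<And>t y. t \<ge> 0 \<Longrightarrow> p t y \<ge> 0"
    and drift_h: "\<And>x. generator r h x \<ge> 0"
    and drift_\<Phi>: "\<And>x. generator r \<Phi> x \<le> 0"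
    and h_le_\<Phi>: "\<And>x. h x \<le> \<Phi> x"
  shows "\<exists>L. ((\<lambda>t. \<Sum>y\<in>UNIV. p t y * h y) \<longlongrightarrow> L) at_top \<and> L \<le> \<Phi> x0"
proof (rule mono_bounded_tendsto_at_top)
  show "(\<Sum>y\<in>UNIV. p s y * h y) \<le> (\<Sum>y\<in>UNIV. p t y * h y)" if "0 \<le> s" "s \<le> t" for s t
    by (rule forward_equation_expectation_mono[OF fwd p_nonneg drift_h that])
  show "(\<Sum>y\<in>UNIV. p t y * h y) \<le> \<Phi> x0" if "0 \<le> t" for t
  proof -
    have "(\<Sum>y\<in>UNIV. p t y * h y) \<le> (\<Sum>y\<in>UNIV. p t y * \<Phi> y)"
      using p_nonneg[OF that] h_le_\<Phi> by (intro sum_mono mult_left_mono) auto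
    also have "\<dots> \<le> (\<Sum>y\<in>UNIV. p 0 y * \<Phi> y)"
      by (rule forward_equation_expectation_antimono[OF fwd p_nonneg drift_\<Phi> order_refl that])
    finally show ?thesis
      by (simp add: forward_equation_expectation_0[OF fwd])
  qed
qed

lemma sum_fun_upd:
  fixes \<psi> :: "'n::finite \<Rightarrow> 'b \<Rightarrow> 'c::ab_group_add"
  shows "(\<Sum>k\<in>UNIV. \<psi> k ((x(i := z)) k)) = (\<Sum>k\<in>UNIV. \<psi> k (x k)) + (\<psi> i z - \<psi> i (x i))"
proof -
  have "(\<Sum>k\<in>UNIV. \<psi> k ((x(i := z)) k)) = \<psi> i z + (\<Sum>k\<in>UNIV - {i}. \<psi> k (x k))"
    by (simp add: sum.remove[of UNIV i])
  moreover have "(\<Sum>k\<in>UNIV. \<psi> k (x k)) = \<psi> i (x i) + (\<Sum>k\<in>UNIV - {i}. \<psi> k (x k))"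
    by (simp add: sum.remove[of UNIV i])
  ultimately show ?thesis
    by (simp add: algebra_simps)
qed

lemma sir_rate_nonneg:
  assumes "\<And>i j. a i j \<ge> 0" "\<And>i. \<beta> i \<ge> 0" "\<And>i. \<delta> i \<ge> 0"
  shows "sir_rate a \<beta> \<delta> x y \<ge> 0"
  unfolding sir_rate_def using assms
  by (intro sum_nonneg add_nonneg_nonneg) (auto intro!: mult_nonneg_nonneg sum_nonneg)

lemma sir_rate_nonzero_cases:
  assumes "sir_rate a \<beta> \<delta> x y \<noteq> 0"
  obtains i where "x i = Sus" "y = x(i := Inf)" | i where "x i = Inf" "y = x(i := Rem)"
proof -
  obtain i where "(if x i = Sus \<and> y = x(i := Inf)
        then \<beta> i * (\<Sum>j\<in>UNIV. a i j * (if x j = Inf then 1 else 0)) else 0)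
      + (if x i = Inf \<and> y = x(i := Rem) then \<delta> i else 0) \<noteq> 0"
    using assms unfolding sir_rate_def by (meson sum.neutral)
  with that show ?thesis
    by (auto split: if_splits)
qed

definition st_rank :: "st \<Rightarrow> nat"
  where "st_rank s = (case s of Sus \<Rightarrow> 0 | st.Inf \<Rightarrow> 1 | Rem \<Rightarrow> 2)"

lemma sir_rate_nonzero_imp_rank_less:
  assumes "sir_rate a \<beta> \<delta> x y \<noteq> 0"
  shows "(\<Sum>k\<in>UNIV. st_rank (x k)) < (\<Sum>k\<in>UNIV. st_rank (y k))"
proof -
  obtain i s where upd: "y = x(i := s)" and rank_i: "st_rank (x i) < st_rank s"
    using assms by (cases rule: sir_rate_nonzero_cases) (auto simp: st_rank_def)
  have "int (\<Sum>k\<in>UNIV. st_rank (y k))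
      = int (\<Sum>k\<in>UNIV. st_rank (x k)) + (int (st_rank s) - int (st_rank (x i)))"
    unfolding upd of_nat_sum by (rule sum_fun_upd)
  then show ?thesis
    using rank_i by linarith
qed

lemma sir_dist_nonneg:
  assumes "sir_dist a \<beta> \<delta> x0 p"
    and "\<And>i j. a i j \<ge> 0" "\<And>i. \<beta> i \<ge> 0" "\<And>i. \<delta> i \<ge> 0" "t \<ge> 0"
  shows "p t y \<ge> 0"
proof -
  have "forward_equation (sir_rate a \<beta> \<delta>) x0 p"
    using assms(1) by (simp add: sir_dist_iff_forward_equation)
  then show ?thesis
    using sir_rate_nonneg[OF assms(2-4)] sir_rate_nonzero_imp_rank_less assms(5)
    by (rule forward_equation_nonneg)
qed

lemma generator_sir_rate_additive:
  fixes \<psi> :: "'n::finite \<Rightarrow> st \<Rightarrow> real"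
  shows "generator (sir_rate a \<beta> \<delta>) (\<lambda>y. \<Sum>k\<in>UNIV. \<psi> k (y k)) x
     = (\<Sum>i\<in>UNIV.
          (if x i = Sus then \<beta> i * (\<Sum>j\<in>UNIV. a i j * (if x j = Inf then 1 else 0))
                              * (\<psi> i Inf - \<psi> i Sus) else 0)
        + (if x i = Inf then \<delta> i * (\<psi> i Rem - \<psi> i Inf) else 0))"
proof -
  have if_conj_eq: "(if P \<and> y = z then c else (0::real)) = (if y = z then (if P then c else 0) else 0)"
    for P y z c by auto
  show ?thesis
    unfolding generator_def sir_rate_def sum_distrib_right
    by (subst sum.swap)
       (simp add: if_conj_eq distrib_right sum.distrib sum_fun_upd if_distrib[of "\<lambda>u. u * _"]
         del: fun_upd_apply cong: if_cong)
qed

lemma count_st_eq_sum: "count_st s y = (\<Sum>k\<in>UNIV. if y k = s then 1 else 0)"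
  unfolding count_st_def by (simp add: sum.If_cases)

lemma generator_count_Rem_nonneg:
  assumes "\<And>i. \<delta> i \<ge> 0"
  shows "generator (sir_rate a \<beta> \<delta>) (count_st Rem) x \<ge> 0"
  using generator_sir_rate_additive[of a \<beta> \<delta> "\<lambda>k s. if s = Rem then 1 else 0" x] assms
  by (simp add: count_st_eq_sum[abs_def] sum_nonneg)

subsection \<open>The Lyapunov function\<close>

text \<open>Susceptible nodes that were not susceptible at time 0 are unreachable; weighting them
  like infected ones makes the drift estimate hold in every configuration, not just the
  reachable ones.\<close>

definition sir_lyapunov_weight :: "('n \<Rightarrow> st) \<Rightarrow> ('n \<Rightarrow> real) \<Rightarrow> 'n \<Rightarrow> st \<Rightarrow> real"
  where "sir_lyapunov_weight x0 v k s =
    (case s of Sus \<Rightarrow> (if x0 k = Sus then 0 else v k) | st.Inf \<Rightarrow> v k | Rem \<Rightarrow> 1)"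

definition sir_lyapunov :: "('n::finite \<Rightarrow> st) \<Rightarrow> ('n \<Rightarrow> real) \<Rightarrow> ('n \<Rightarrow> st) \<Rightarrow> real"
  where "sir_lyapunov x0 v y = (\<Sum>k\<in>UNIV. sir_lyapunov_weight x0 v k (y k))"

lemma count_Rem_le_sir_lyapunov:
  assumes "\<And>k. v k \<ge> 0"
  shows "count_st Rem y \<le> sir_lyapunov x0 v y"
  unfolding count_st_eq_sum sir_lyapunov_def
  by (rule sum_mono) (use assms in \<open>auto simp: sir_lyapunov_weight_def split: st.splits\<close>)

lemma sir_lyapunov_initial:
  assumes "\<And>k. x0 k \<in> {Sus, Inf}"
  shows "sir_lyapunov x0 v x0 = (\<Sum>k\<in>UNIV. v k * (if x0 k = Inf then 1 else 0))"
  unfolding sir_lyapunov_def by (rule sum.cong) (use assms in \<open>auto simp: sir_lyapunov_weight_def\<close>)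

lemma generator_sir_lyapunov_nonpos:
  assumes a_nonneg: "\<And>i j. a i j \<ge> 0" and \<beta>_nonneg: "\<And>i. \<beta> i \<ge> 0"
    and v_nonneg: "\<And>i. v i \<ge> 0"
    and spectral: "\<And>k. (\<Sum>i\<in>UNIV. v i * (if x0 i = Sus then 1 else 0) * \<beta> i * a i k) + \<delta> k
                        \<le> v k * \<delta> k"
  shows "generator (sir_rate a \<beta> \<delta>) (sir_lyapunov x0 v) x \<le> 0"
proof -
  define s0 where "s0 i = (if x0 i = Sus then 1 else (0::real))" for i
  define I where "I j = (if x j = Inf then 1 else (0::real))" for j
  have "generator (sir_rate a \<beta> \<delta>) (sir_lyapunov x0 v) x
      = (\<Sum>i\<in>UNIV. if x i = Sus then \<beta> i * (\<Sum>j\<in>UNIV. a i j * I j) * (v i * s0 i) else 0)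
      + (\<Sum>j\<in>UNIV. if x j = Inf then \<delta> j * (1 - v j) else 0)"
  proof -
    have weight_Inf: "sir_lyapunov_weight x0 v i Inf - sir_lyapunov_weight x0 v i Sus = v i * s0 i"
      and weight_Rem: "sir_lyapunov_weight x0 v i Rem - sir_lyapunov_weight x0 v i Inf = 1 - v i"
      for i by (simp_all add: sir_lyapunov_weight_def s0_def)
    show ?thesis
      unfolding sir_lyapunov_def[abs_def] generator_sir_rate_additive I_def
      by (simp only: weight_Inf weight_Rem sum.distrib)
  qed
  also have "\<dots> \<le> (\<Sum>i\<in>UNIV. \<Sum>j\<in>UNIV. I j * (v i * s0 i * \<beta> i * a i j))
      + (\<Sum>j\<in>UNIV. I j * (\<delta> j - v j * \<delta> j))"
  proof (intro add_mono sum_mono)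
    fix i
    have "0 \<le> (\<Sum>j\<in>UNIV. I j * (v i * s0 i * \<beta> i * a i j))"
      using a_nonneg \<beta>_nonneg v_nonneg by (intro sum_nonneg) (simp add: I_def s0_def)
    then show "(if x i = Sus then \<beta> i * (\<Sum>j\<in>UNIV. a i j * I j) * (v i * s0 i) else 0)
        \<le> (\<Sum>j\<in>UNIV. I j * (v i * s0 i * \<beta> i * a i j))"
      by (simp add: sum_distrib_left sum_distrib_right mult_ac)
  qed (simp add: I_def algebra_simps)
  also have "\<dots> = (\<Sum>j\<in>UNIV. I j * ((\<Sum>i\<in>UNIV. v i * s0 i * \<beta> i * a i j) + \<delta> j - v j * \<delta> j))"
    by (subst sum.swap) (simp add: sum_distrib_left sum.distrib[symmetric] algebra_simps)
  also have "\<dots> \<le> 0"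
    using spectral by (intro sum_nonpos) (simp add: I_def s0_def)
  finally show ?thesis .
qed

lemma sir_expected_removed_limit_le:
  assumes sd: "sir_dist a \<beta> \<delta> x0 p"
    and a_nonneg: "\<And>i j. a i j \<ge> 0" and \<beta>_nonneg: "\<And>i. \<beta> i \<ge> 0"
    and \<delta>_nonneg: "\<And>i. \<delta> i \<ge> 0" and v_nonneg: "\<And>i. v i \<ge> 0"
    and spectral: "\<And>k. (\<Sum>i\<in>UNIV. v i * (if x0 i = Sus then 1 else 0) * \<beta> i * a i k) + \<delta> k
                        \<le> v k * \<delta> k"
  shows "\<exists>L. ((\<lambda>t. \<Sum>y\<in>UNIV. p t y * count_st Rem y) \<longlongrightarrow> L) at_top \<and>
             L \<le> sir_lyapunov x0 v x0"
proof (rule forward_equation_expectation_limit_le[where h = "count_st Rem" and \<Phi> = "sir_lyapunov x0 v"])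
  show "forward_equation (sir_rate a \<beta> \<delta>) x0 p"
    using sd by (simp add: sir_dist_iff_forward_equation)
  show "p t y \<ge> 0" if "t \<ge> 0" for t y
    using sd a_nonneg \<beta>_nonneg \<delta>_nonneg that by (rule sir_dist_nonneg)
  show "generator (sir_rate a \<beta> \<delta>) (count_st Rem) x \<ge> 0" for x
    using \<delta>_nonneg by (rule generator_count_Rem_nonneg)
  show "generator (sir_rate a \<beta> \<delta>) (sir_lyapunov x0 v) x \<le> 0" for x
    using a_nonneg \<beta>_nonneg v_nonneg spectral by (rule generator_sir_lyapunov_nonpos)
  show "count_st Rem y \<le> sir_lyapunov x0 v y" for y
    using v_nonneg by (rule count_Rem_le_sir_lyapunov)
qed

theorem theorem1:
  fixes a :: "'n::finite \<Rightarrow> 'n \<Rightarrow> real"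
    and x0 :: "'n \<Rightarrow> st"
    and Cbar lbar :: real
    and blo bhi dlo dhi \<beta> \<delta> v :: "'n \<Rightarrow> real"
    and f g :: "'n \<Rightarrow> real \<Rightarrow> real"
  assumes graph01: "\<And>i j. a i j \<in> {0, 1}"
    and graph_sym: "\<And>i j. a i j = a j i"
    and graph_loop: "\<And>i. a i i = 0"
    and init: "\<And>i. x0 i \<in> {Sus, Inf}"
    and Cbar_pos: "Cbar > 0"
    and lbar_pos: "lbar > 0"
    and blo_pos: "\<And>i. 0 < blo i" and bhi: "\<And>i. blo i \<le> bhi i"
    and dlo_pos: "\<And>i. 0 < dlo i" and dhi: "\<And>i. dlo i \<le> dhi i"
    and f_posy: "\<And>i. posynomial (f i)"
    and g_posy: "\<And>i. posynomial (g i)"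
    and v_pos: "\<And>i. v i > 0"
    and budget: "(\<Sum>i\<in>UNIV. f i (\<delta> i) + g i (\<beta> i)) \<le> Cbar"
    and spectral: "\<And>k. (\<Sum>i\<in>UNIV. v i * (if x0 i = Sus then 1 else 0) * \<beta> i * a i k) + \<delta> k
                        < v k * \<delta> k"
    and init_bound: "(\<Sum>i\<in>UNIV. v i * (if x0 i = Inf then 1 else 0)) < lbar + count_st Inf x0"
    and b_bounds: "\<And>i. blo i \<le> \<beta> i \<and> \<beta> i \<le> bhi i"
    and d_bounds: "\<And>i. dlo i \<le> \<delta> i \<and> \<delta> i \<le> dhi i"
  shows "(\<forall>i. blo i \<le> \<beta> i \<and> \<beta> i \<le> bhi i) \<and>
         (\<forall>i. dlo i \<le> \<delta> i \<and> \<delta> i \<le> dhi i) \<and>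
         (\<Sum>i\<in>UNIV. f i (\<delta> i) + g i (\<beta> i)) \<le> Cbar \<and>
         (\<forall>p. sir_dist a \<beta> \<delta> x0 p \<longrightarrow>
            (\<exists>L. ((\<lambda>t. \<Sum>y\<in>UNIV. p t y * count_st Rem y) \<longlongrightarrow> L) at_top \<and>
                 L - count_st Inf x0 \<le> lbar))"
proof -
  have a_nonneg: "a i j \<ge> 0" for i j using graph01[of i j] by auto
  have \<beta>_nonneg: "\<beta> i \<ge> 0" for i using blo_pos[of i] b_bounds[of i] by linarith
  have \<delta>_nonneg: "\<delta> i \<ge> 0" for i using dlo_pos[of i] d_bounds[of i] by linarith
  have v_nonneg: "v i \<ge> 0" for i using v_pos[of i] by linarith
  have "sir_lyapunov x0 v x0 < lbar + count_st Inf x0"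
    using init_bound by (simp add: sir_lyapunov_initial[of x0, OF init])
  moreover have "\<exists>L. ((\<lambda>t. \<Sum>y\<in>UNIV. p t y * count_st Rem y) \<longlongrightarrow> L) at_top \<and>
                     L \<le> sir_lyapunov x0 v x0" if "sir_dist a \<beta> \<delta> x0 p" for p
    using that a_nonneg \<beta>_nonneg \<delta>_nonneg v_nonneg less_imp_le[OF spectral]
    by (rule sir_expected_removed_limit_le)
  ultimately have "\<exists>L. ((\<lambda>t. \<Sum>y\<in>UNIV. p t y * count_st Rem y) \<longlongrightarrow> L) at_top \<and>
                     L - count_st Inf x0 \<le> lbar" if "sir_dist a \<beta> \<delta> x0 p" for p
    using that by force
  then show ?thesis
    using b_bounds d_bounds budget by blast
qed

end
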